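(* Let $G=(V,E)$ be a connected finite graph and let $0<\beta<1$. Then every complex zero $\lambda$ of the polynomial $\mathcal{D}Z_I(G,\beta,\lambda)=\lambda\frac{\partial}{\partial\lambda}Z_I(G,\beta,\lambda)$ (viewed as a polynomial in $\lambda$) satisfies $|\lambda|<1$. In particular $Z_I(G,\beta,\lambda)$ and $\mathcal{D}Z_I(G,\beta,\lambda)$ have no common zero, i.e. $Z_I(G,\beta,\cdot)$ has only simple zeros.
   Context: For a finite undirected graph $G=(V,E)$, $0<\beta\le 1$ and $\lambda\in\mathbb{C}$, the ferromagnetic Ising partition function is $Z_I(G,\beta,\lambda)=\sum_{\sigma\in\{+,-\}^V}\beta^{d(\sigma)}\lambda^{p(\sigma)}$, where $d(\sigma)$ is the number of edges $\{u,v\}\in E$ with $\sigma(u)\neq\sigma(v)$ and $p(\sigma)$ is the number of vertices $v$ with $\sigma(v)=+$. It is a polynomial in $\lambda$ of degree $|V|$. *)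

theory Defs
  imports Complex_Main "HOL-Computational_Algebra.Polynomial" "HOL-Library.FuncSet"
begin

definition finite_graph :: "'a set \<Rightarrow> 'a set set \<Rightarrow> bool" where
  "finite_graph V E \<longleftrightarrow> finite V \<and>
     (\<forall>e\<in>E. \<exists>u v. e = {u, v} \<and> u \<noteq> v \<and> u \<in> V \<and> v \<in> V)"

definition adj :: "'a set set \<Rightarrow> 'a \<Rightarrow> 'a \<Rightarrow> bool" where
  "adj E u v \<longleftrightarrow> {u, v} \<in> E"

definition connected_graph :: "'a set \<Rightarrow> 'a set set \<Rightarrow> bool" where
  "connected_graph V E \<longleftrightarrow> V \<noteq> {} \<and> (\<forall>u\<in>V. \<forall>v\<in>V. (adj E)\<^sup>*\<^sup>* u v)"

text \<open>Spin configurations sigma : V -> {+,-}, with True = + (extensional outside V).\<close>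
definition configs :: "'a set \<Rightarrow> ('a \<Rightarrow> bool) set" where
  "configs V = V \<rightarrow>\<^sub>E (UNIV :: bool set)"

definition disagree :: "'a set set \<Rightarrow> ('a \<Rightarrow> bool) \<Rightarrow> nat" where
  "disagree E \<sigma> = card {e \<in> E. \<exists>u v. e = {u, v} \<and> \<sigma> u \<noteq> \<sigma> v}"

definition plus_count :: "'a set \<Rightarrow> ('a \<Rightarrow> bool) \<Rightarrow> nat" where
  "plus_count V \<sigma> = card {v \<in> V. \<sigma> v}"

definition Z_I :: "'a set \<Rightarrow> 'a set set \<Rightarrow> real \<Rightarrow> complex poly" where
  "Z_I V E \<beta> = (\<Sum>\<sigma>\<in>configs V. monom (complex_of_real \<beta> ^ disagree E \<sigma>) (plus_count V \<sigma>))"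

definition DZ_I :: "'a set \<Rightarrow> 'a set set \<Rightarrow> real \<Rightarrow> complex poly" where
  "DZ_I V E \<beta> = [:0, 1:] * pderiv (Z_I V E \<beta>)"

end

theory Submission
  imports Defs "HOL-Computational_Algebra.Fundamental_Theorem_Algebra"
begin

text \<open>
  Write Z_I(\<lambda>) as the diagonal \<mu>_v = \<lambda> of the multiaffine polynomial
  F(\<mu>) = \<Sum>_{S \<subseteq> V} \<beta>^{|\<delta>S|} \<Prod>_{v\<in>S} \<mu>_v, where \<delta>S is the set of edges leaving S.

  1. Two-variable lemmas: the edge factor 1 + \<beta>x + \<beta>y + xy has no zeros in the open
     bidisk; Asano contraction; hence multiplying the coefficients of x and y by \<beta>
     preserves nonvanishing on the open bidisk, and even on |x| < 1, |y| \<le> 1; finally an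
     alignment lemma for the gradient at a zero on the torus.
  2. Lee--Yang with boundary values (lee_yang_anchored), by induction on the edge set:
     F(\<mu>) \<noteq> 0 if all |\<mu>_v| \<le> 1 and every vertex is connected to one with |\<mu>_v| < 1.
  3. For connected graphs: Z_I has no zeros in |\<lambda>| < 1, and by spin-flip symmetry none in
     |\<lambda>| > 1.  At a zero l (|l| = 1) every partial derivative of F is nonzero and all of
     them lie in one half-plane, so Z_I'(l), their sum, is nonzero: the zeros are simple.
  4. A Gauss--Lucas type estimate shows Z_I' has no zeros in |\<lambda>| \<ge> 1 other than zeros
     of Z_I; combined with 3 this gives the theorem, since DZ_I = \<lambda> Z_I'.
\<close>

lemma eventually_at_right_zero_witness:
  assumes "eventually P (at_right (0::real))"
  shows "\<exists>s. 0 < s \<and> s < 1 \<and> P s"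
proof -
  have "eventually (\<lambda>s::real. s < 1) (at_right 0)"
    unfolding eventually_at_right_field by (intro exI[of _ 1]) auto
  then have "eventually (\<lambda>s. 0 < s \<and> s < 1 \<and> P s) (at_right 0)"
    using assms eventually_at_right_less[of "0::real"] by eventually_elim auto
  then show ?thesis by (rule eventually_happens'[rotated]) simp
qed

text \<open>The one-edge Ising polynomial 1 + \<beta>x + \<beta>y + xy has no zeros in the open unit bidisk,
  because |1 + \<beta>x| > |\<beta> + x| for |x| < 1.\<close>
lemma edge_factor_nonzero:
  fixes x y :: complex and \<beta> :: real
  assumes \<beta>: "0 < \<beta>" "\<beta> < 1" and x: "cmod x < 1" and y: "cmod y < 1"
  shows "1 + \<beta>*x + \<beta>*y + x*y \<noteq> 0"
proof
  assume "1 + \<beta>*x + \<beta>*y + x*y = 0"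
  then have "1 + \<beta>*x = - y * (\<beta> + x)"
    by (simp add: algebra_simps eq_neg_iff_add_eq_0)
  then have "cmod (1 + \<beta>*x) \<le> cmod (\<beta> + x)"
    using y by (simp add: norm_mult mult_left_le_one_le)
  moreover have "(cmod (1 + \<beta>*x))^2 - (cmod (\<beta> + x))^2 = (1 - \<beta>^2) * (1 - (cmod x)^2)"
    unfolding cmod_power2 by (simp add: power2_eq_square algebra_simps)
  moreover have "\<beta>^2 < 1" "(cmod x)^2 < 1"
    using \<beta> x by (simp_all add: abs_square_less_1)
  ultimately show False
    by (smt (verit) mult_pos_pos norm_ge_zero power_mono)
qed

text \<open>Asano contraction: if a + bx + cx' + dxx' has no zeros in the open bidisk, then a + dz has
  none in the open disk.  Put x = x' = t: the two roots t of a + (b+c)t + dt^2 have product -z.\<close>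
lemma asano_contraction:
  fixes a b c d z :: complex
  assumes nz: "\<And>x x'. cmod x < 1 \<Longrightarrow> cmod x' < 1 \<Longrightarrow> a + b*x + c*x' + d*x*x' \<noteq> 0"
    and z: "cmod z < 1"
  shows "a + d*z \<noteq> 0"
proof
  assume az: "a + d*z = 0"
  show False
  proof (cases "d = 0")
    case True
    then show False using az nz[of 0 0] by simp
  next
    case d: False
    define s where "s = csqrt ((b+c)^2 - 4*a*d)"
    have s2: "s^2 = (b+c)^2 - 4*a*d" unfolding s_def by simp
    define t1 where "t1 = (-(b+c) + s) / (2*d)"
    define t2 where "t2 = (-(b+c) - s) / (2*d)"
    have roots: "a + (b+c)*t + d*t^2 = 0" if "t \<in> {t1, t2}" for t
      using that d s2 unfolding t1_def t2_def
      by (auto simp: field_simps power2_eq_square) algebra+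
    have "t1 * t2 = a / d"
      unfolding t1_def t2_def using d s2 by (simp add: field_simps power2_eq_square) algebra
    also have "a / d = - z" using az d by (simp add: field_simps add_eq_0_iff)
    finally have "cmod t1 * cmod t2 < 1" using z by (metis norm_minus_cancel norm_mult)
    then have "cmod t1 < 1 \<or> cmod t2 < 1"
      by (smt (verit) mult_le_cancel_left1 norm_ge_zero)
    then obtain t where "t \<in> {t1, t2}" "cmod t < 1" by blast
    then show False
      using nz[of t t] roots[of t] by (simp add: algebra_simps power2_eq_square)
  qed
qed

text \<open>Multiply by the edge factor in fresh variables and
  contract twice.\<close>
lemma edge_product_open:
  fixes A B C D x0 y0 :: complex and \<beta> :: real
  assumes \<beta>: "0 < \<beta>" "\<beta> < 1"
    and nz: "\<And>x y. cmod x < 1 \<Longrightarrow> cmod y < 1 \<Longrightarrow> A + B*x + C*y + D*x*y \<noteq> 0"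
    and x0: "cmod x0 < 1" and y0: "cmod y0 < 1"
  shows "A + \<beta>*B*x0 + \<beta>*C*y0 + D*x0*y0 \<noteq> 0"
proof -
  have product: "(A + B*x + C*y + D*x*y) * (1 + \<beta>*x' + \<beta>*y' + x'*y') =
      (A+C*y)*(1+\<beta>*y') + ((B+D*y)*(1+\<beta>*y'))*x + ((A+C*y)*(\<beta>+y'))*x' + ((B+D*y)*(\<beta>+y'))*x*x'"
    for x y x' y' :: complex
    by (simp add: algebra_simps)
  have contract_x: "(A + \<beta>*B*x0) + (C + \<beta>*D*x0)*y + (\<beta>*A + B*x0)*y' + (\<beta>*C + D*x0)*y*y' \<noteq> 0"
    if y: "cmod y < 1" and y': "cmod y' < 1" for y y'
  proof -
    have "(A+C*y)*(1+\<beta>*y') + ((B+D*y)*(\<beta>+y'))*x0 \<noteq> 0"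
    proof (rule asano_contraction[OF _ x0])
      fix x x' :: complex assume "cmod x < 1" "cmod x' < 1"
      then show "(A+C*y)*(1+\<beta>*y') + ((B+D*y)*(1+\<beta>*y'))*x + ((A+C*y)*(\<beta>+y'))*x'
          + ((B+D*y)*(\<beta>+y'))*x*x' \<noteq> 0"
        using nz y edge_factor_nonzero[OF \<beta> _ y'] product by (metis mult_eq_0_iff)
    qed
    then show ?thesis by (simp add: algebra_simps)
  qed
  have "(A + \<beta>*B*x0) + (\<beta>*C + D*x0)*y0 \<noteq> 0"
    by (rule asano_contraction[OF _ y0]) (use contract_x in blast)
  then show ?thesis by (simp add: algebra_simps)
qed

lemma edge_product_closed:
  fixes A B C D x0 y1 :: complex and \<beta> :: real
  assumes \<beta>: "0 < \<beta>" "\<beta> < 1"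
    and nz: "\<And>x y. cmod x < 1 \<Longrightarrow> cmod y < 1 \<Longrightarrow> A + B*x + C*y + D*x*y \<noteq> 0"
    and x0: "cmod x0 < 1" and y1: "cmod y1 \<le> 1"
  shows "A + \<beta>*B*x0 + \<beta>*C*y1 + D*x0*y1 \<noteq> 0"
proof (cases "cmod y1 < 1")
  case True
  then show ?thesis using edge_product_open[OF \<beta> nz x0] by blast
next
  case False
  then have y1: "cmod y1 = 1" using y1 by simp
  define N where "N y = A + \<beta>*C*y" for y
  define M where "M y = \<beta>*B + D*y" for y
  have split_x: "A + \<beta>*B*x + \<beta>*C*y + D*x*y = N y + x * M y" for x y
    unfolding N_def M_def by (simp add: algebra_simps)
  show ?thesis
  proof
    assume zero: "A + \<beta>*B*x0 + \<beta>*C*y1 + D*x0*y1 = 0"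
    show False
    proof (cases "M y1 = 0")
      case True
      then have A: "A = - \<beta>*C*y1" using zero split_x[of x0 y1] unfolding N_def by (simp add: add_eq_0_iff)
      show False
      proof (cases "C = 0")
        case True
        then show False using nz[of 0 0] A by simp
      next
        case False
        have "cmod (-A/C) = \<beta>" using A False y1 \<beta> by (simp add: norm_mult norm_divide)
        then show False using nz[of 0 "-A/C"] False \<beta> by simp
      qed
    next
      case False
      text \<open>Move y1 radially into the disk; the zero in x then moves only slightly.\<close>
      define y where "y s = complex_of_real (1 - s) * y1" for s :: real
      have "N y1 = - x0 * M y1" using zero split_x[of x0 y1] by (simp add: eq_neg_iff_add_eq_0)
      then have "cmod (N y1) - cmod (M y1) < 0" using x0 False by (simp add: norm_mult)
      moreover have "((\<lambda>s. cmod (N (y s)) - cmod (M (y s))) \<longlongrightarrow> cmod (N y1) - cmod (M y1)) (at_right 0)"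
        unfolding N_def M_def y_def by (rule tendsto_eq_intros refl | simp)+
      ultimately have "eventually (\<lambda>s. cmod (N (y s)) - cmod (M (y s)) < 0) (at_right 0)"
        using order_tendstoD(2) by blast
      then obtain s where s: "0 < s" "s < 1" and NM: "cmod (N (y s)) < cmod (M (y s))"
        using eventually_at_right_zero_witness by force
      have ys: "cmod (y s) < 1" unfolding y_def using s y1 by (simp add: norm_mult del: of_real_diff)
      have M0: "M (y s) \<noteq> 0" using NM by auto
      have "cmod (- N (y s) / M (y s)) < 1" using NM M0 by (simp add: norm_divide divide_less_eq)
      moreover have "N (y s) + (- N (y s) / M (y s)) * M (y s) = 0" using M0 by simp
      ultimately show False
        using edge_product_open[OF \<beta> nz _ ys] split_x by metis
    qed
  qed
qed

text \<open>If A + Bx + Cy + Dxy has no zeros in the open bidisk but vanishes at (l, l) on the torus,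
  then its two partial derivatives there lie in a common half-plane; otherwise the zero
  could be pushed into the bidisk along x = (1 - s) l.\<close>
lemma boundary_zero_alignment:
  fixes A B C D l :: complex
  assumes l: "cmod l = 1" and zero: "A + B*l + C*l + D*l*l = 0" and c_nz: "C + D*l \<noteq> 0"
    and nz: "\<And>x y. cmod x < 1 \<Longrightarrow> cmod y < 1 \<Longrightarrow> A + B*x + C*y + D*x*y \<noteq> 0"
  shows "Re ((B + D*l) / (C + D*l)) \<ge> 0"
proof (rule ccontr)
  assume neg: "\<not> Re ((B + D*l) / (C + D*l)) \<ge> 0"
  define b where "b = B + D*l"
  define c where "c = C + D*l"
  text \<open>Along x = (1 - s) l the zero of the polynomial in y is y = l (1 + s q s).\<close>
  define q where "q s = b / (c - D*l*complex_of_real s)" for s :: real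
  define f where "f s = 2 * Re (q s) + s * (cmod (q s))^2" for s :: real
  have c0: "c \<noteq> 0" using c_nz unfolding c_def .
  have "((\<lambda>s. c - D*l*complex_of_real s) \<longlongrightarrow> c) (at_right 0)"
    by (rule tendsto_eq_intros refl | simp)+
  then have den_ev: "eventually (\<lambda>s. c - D*l*complex_of_real s \<noteq> 0) (at_right 0)"
    using tendsto_imp_eventually_ne c0 by blast
  have "(f \<longlongrightarrow> f 0) (at_right 0)"
    unfolding f_def q_def using c0 by (intro tendsto_intros) auto
  then have f_ev: "eventually (\<lambda>s. f s < 0) (at_right 0)"
    using neg c0 unfolding f_def q_def b_def c_def by (intro order_tendstoD(2)) auto
  from f_ev den_ev have "eventually (\<lambda>s. f s < 0 \<and> c - D*l*complex_of_real s \<noteq> 0) (at_right 0)"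
    by eventually_elim auto
  then obtain s where s: "0 < s" "s < 1" and fs: "f s < 0" and den: "c - D*l*complex_of_real s \<noteq> 0"
    using eventually_at_right_zero_witness by force
  define x where "x = l * complex_of_real (1 - s)"
  define y where "y = l * (1 + complex_of_real s * q s)"
  have x: "cmod x < 1" unfolding x_def using l s by (simp add: norm_mult del: of_real_diff)
  have "(cmod (1 + complex_of_real s * q s))^2 = 1 + s * f s"
    unfolding cmod_power2 f_def by (simp add: power2_eq_square algebra_simps)
  also have "\<dots> < 1" using fs s by (simp add: mult_pos_neg)
  finally have y: "cmod y < 1" unfolding y_def using l by (simp add: norm_mult abs_square_less_1)
  have "A + B*x + C*y + D*x*y = b*(x-l) + c*(y-l) + D*(x-l)*(y-l)"
    using zero unfolding b_def c_def by (simp add: algebra_simps)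
  also have "\<dots> = l * complex_of_real s * (q s * (c - D*l*complex_of_real s) - b)"
    unfolding x_def y_def by (simp add: algebra_simps)
  also have "\<dots> = 0" unfolding q_def using den by simp
  finally show False using nz[OF x y] by simp
qed

definition cut_size :: "'a set set \<Rightarrow> 'a set \<Rightarrow> nat" where
  "cut_size H S = card {e \<in> H. \<exists>u v. e = {u, v} \<and> (u \<in> S) \<noteq> (v \<in> S)}"

definition cut_weight :: "'a set set \<Rightarrow> real \<Rightarrow> 'a set \<Rightarrow> complex" where
  "cut_weight H \<beta> S = complex_of_real (\<beta> ^ cut_size H S)"

definition multiaffine :: "'a set \<Rightarrow> ('a set \<Rightarrow> complex) \<Rightarrow> ('a \<Rightarrow> complex) \<Rightarrow> complex" where
  "multiaffine V w \<mu> = (\<Sum>S\<in>Pow V. w S * (\<Prod>v\<in>S. \<mu> v))"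

text \<open>Coefficients of the multiaffine polynomial viewed as a bilinear polynomial in \<mu> u and
  \<mu> v; the set T \<subseteq> {u, v} selects the monomial.\<close>
definition pair_coeff ::
    "'a set \<Rightarrow> 'a \<Rightarrow> 'a \<Rightarrow> ('a set \<Rightarrow> complex) \<Rightarrow> ('a \<Rightarrow> complex) \<Rightarrow> 'a set \<Rightarrow> complex" where
  "pair_coeff V u v w \<mu> T = (\<Sum>S\<in>Pow (V - {u, v}). w (T \<union> S) * (\<Prod>x\<in>S. \<mu> x))"

text \<open>At the constant point l the multiaffine polynomial is affine in a single activity \<mu> v:
  vertex_rest is its value at \<mu> v = 0 and vertex_partial its partial derivative.\<close>
definition vertex_rest :: "'a set \<Rightarrow> ('a set \<Rightarrow> complex) \<Rightarrow> complex \<Rightarrow> 'a \<Rightarrow> complex" where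
  "vertex_rest V w l v = (\<Sum>S\<in>{S\<in>Pow V. v \<notin> S}. w S * l ^ card S)"

definition vertex_partial :: "'a set \<Rightarrow> ('a set \<Rightarrow> complex) \<Rightarrow> complex \<Rightarrow> 'a \<Rightarrow> complex" where
  "vertex_partial V w l v = (\<Sum>S\<in>{S\<in>Pow V. v \<in> S}. w S * l ^ (card S - 1))"

lemma sum_Pow_insert:
  assumes "a \<notin> A" "finite A"
  shows "(\<Sum>S\<in>Pow (insert a A). f S) = (\<Sum>S\<in>Pow A. f S + f (insert a S))"
proof -
  have inj: "inj_on (insert a) (Pow A)"
    using assms(1) by (intro inj_onI) (metis PowD insert_ident subset_iff)
  have "(\<Sum>S\<in>Pow (insert a A). f S) = (\<Sum>S\<in>Pow A. f S) + (\<Sum>S\<in>insert a ` Pow A. f S)"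
    unfolding Pow_insert using assms by (intro sum.union_disjoint) auto
  also have "(\<Sum>S\<in>insert a ` Pow A. f S) = (\<Sum>S\<in>Pow A. f (insert a S))"
    using sum.reindex[OF inj] by simp
  finally show ?thesis by (simp add: sum.distrib)
qed

lemma multiaffine_pair_decomp:
  assumes V: "finite V" "u \<in> V" "v \<in> V" "u \<noteq> v"
  shows "multiaffine V w (\<mu>(u := x, v := y)) =
    pair_coeff V u v w \<mu> {} + pair_coeff V u v w \<mu> {u} * x
      + pair_coeff V u v w \<mu> {v} * y + pair_coeff V u v w \<mu> {u, v} * x * y"
proof -
  define V' where "V' = V - {u, v}"
  define \<mu>' where "\<mu>' = \<mu>(u := x, v := y)"
  define g where "g S = w S * prod \<mu>' S" for S
  have VV: "V = insert u (insert v V')" unfolding V'_def using V by auto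
  have fV': "finite V'" unfolding V'_def using V by simp
  have u: "u \<notin> insert v V'" and v: "v \<notin> V'" unfolding V'_def using V by auto
  have "multiaffine V w \<mu>' =
      (\<Sum>S\<in>Pow V'. (g S + g (insert v S)) + (g (insert u S) + g (insert u (insert v S))))"
    unfolding multiaffine_def VV g_def
    by (simp add: sum_Pow_insert[OF u] sum_Pow_insert[OF v fV'] fV' sum.distrib)
  also have "\<dots> = (\<Sum>S\<in>Pow V'. w S * prod \<mu> S + (w (insert u S) * prod \<mu> S) * x
        + (w (insert v S) * prod \<mu> S) * y + (w (insert u (insert v S)) * prod \<mu> S) * x * y)"
  proof (rule sum.cong[OF refl])
    fix S assume S: "S \<in> Pow V'"
    then have fS: "finite S" and uS: "u \<notin> S" and vS: "v \<notin> S"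
      using fV' finite_subset unfolding V'_def by auto
    have "prod \<mu>' S = prod \<mu> S" unfolding \<mu>'_def using uS vS by (intro prod.cong) auto
    then show "(g S + g (insert v S)) + (g (insert u S) + g (insert u (insert v S))) =
        w S * prod \<mu> S + (w (insert u S) * prod \<mu> S) * x
        + (w (insert v S) * prod \<mu> S) * y + (w (insert u (insert v S)) * prod \<mu> S) * x * y"
      unfolding g_def using fS uS vS V(4) by (simp add: \<mu>'_def algebra_simps)
  qed
  finally show ?thesis
    unfolding \<mu>'_def pair_coeff_def V'_def[symmetric] by (simp add: sum.distrib sum_distrib_right)
qed

lemma multiaffine_update_vertex:
  assumes V: "finite V" and v: "v \<in> V"
  shows "multiaffine V w ((\<lambda>_. l)(v := x)) = vertex_rest V w l v + vertex_partial V w l v * x"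
proof -
  let ?\<mu> = "(\<lambda>_. l)(v := x)"
  have "multiaffine V w ?\<mu> =
      (\<Sum>S\<in>{S\<in>Pow V. v \<in> S}. w S * prod ?\<mu> S) + (\<Sum>S\<in>{S\<in>Pow V. v \<notin> S}. w S * prod ?\<mu> S)"
    unfolding multiaffine_def using V by (subst sum.union_disjoint[symmetric]) (auto intro: sum.cong)
  also have "(\<Sum>S\<in>{S\<in>Pow V. v \<in> S}. w S * prod ?\<mu> S) = vertex_partial V w l v * x"
    unfolding vertex_partial_def sum_distrib_right
  proof (intro sum.cong refl)
    fix S assume "S \<in> {S\<in>Pow V. v \<in> S}"
    then have fS: "finite S" and vS: "v \<in> S" using V finite_subset by auto
    have "prod ?\<mu> S = x * prod ?\<mu> (S - {v})" using fS vS by (simp add: prod.remove)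
    also have "prod ?\<mu> (S - {v}) = l ^ (card S - 1)" using fS vS by (simp add: card_Diff_singleton)
    finally show "w S * prod ?\<mu> S = w S * l ^ (card S - 1) * x" by simp
  qed
  also have "(\<Sum>S\<in>{S\<in>Pow V. v \<notin> S}. w S * prod ?\<mu> S) = vertex_rest V w l v"
    unfolding vertex_rest_def
  proof (intro sum.cong refl)
    fix S assume "S \<in> {S\<in>Pow V. v \<notin> S}"
    then have fS: "finite S" and vS: "v \<notin> S" using V finite_subset by auto
    have "prod ?\<mu> S = prod (\<lambda>_. l) S" using vS by (intro prod.cong) auto
    then show "w S * prod ?\<mu> S = w S * l ^ card S" using fS by simp
  qed
  finally show ?thesis by (simp only: add.commute)
qed

lemma cut_size_insert_edge:
  assumes "finite H" "{u, v} \<notin> H"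
  shows "cut_size (insert {u, v} H) S = cut_size H S + (if (u \<in> S) \<noteq> (v \<in> S) then 1 else 0)"
proof -
  let ?cut = "\<lambda>e. \<exists>a b. e = {a, b} \<and> (a \<in> S) \<noteq> (b \<in> S)"
  have "?cut {u, v} \<longleftrightarrow> (u \<in> S) \<noteq> (v \<in> S)" by (auto simp: doubleton_eq_iff)
  moreover have "{e \<in> insert x H. P e} = (if P x then insert x {e \<in> H. P e} else {e \<in> H. P e})"
    for x and P :: "'a set \<Rightarrow> bool"
    by auto
  ultimately show ?thesis unfolding cut_size_def using assms by (simp del: insert_iff)
qed

lemma multiaffine_insert_edge:
  assumes "finite V" "u \<in> V" "v \<in> V" "u \<noteq> v" "finite H" "{u, v} \<notin> H"
  shows "multiaffine V (cut_weight (insert {u, v} H) \<beta>) \<mu> =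
    pair_coeff V u v (cut_weight H \<beta>) \<mu> {} + \<beta> * pair_coeff V u v (cut_weight H \<beta>) \<mu> {u} * \<mu> u
      + \<beta> * pair_coeff V u v (cut_weight H \<beta>) \<mu> {v} * \<mu> v
      + pair_coeff V u v (cut_weight H \<beta>) \<mu> {u, v} * \<mu> u * \<mu> v"
proof -
  note cut = cut_size_insert_edge[OF assms(5,6)]
  have "pair_coeff V u v (cut_weight (insert {u, v} H) \<beta>) \<mu> T =
      (if card T = 1 then \<beta> else 1) * pair_coeff V u v (cut_weight H \<beta>) \<mu> T"
    if "T \<in> {{}, {u}, {v}, {u, v}}" for T
    using that assms(4) unfolding pair_coeff_def cut_weight_def cut sum_distrib_left
    by (auto intro!: sum.cong)
  then show ?thesis
    using multiaffine_pair_decomp[OF assms(1-4), of _ \<mu> "\<mu> u" "\<mu> v"] assms(4) by simp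
qed

definition edges_within :: "'a set \<Rightarrow> 'a set set \<Rightarrow> bool" where
  "edges_within V H \<longleftrightarrow> (\<forall>e\<in>H. \<exists>u v. e = {u, v} \<and> u \<noteq> v \<and> u \<in> V \<and> v \<in> V)"

definition anchored :: "'a set \<Rightarrow> 'a set set \<Rightarrow> ('a \<Rightarrow> complex) \<Rightarrow> bool" where
  "anchored V H \<mu> \<longleftrightarrow> (\<forall>z\<in>V. \<exists>s\<in>V. cmod (\<mu> s) < 1 \<and> (adj H)\<^sup>*\<^sup>* z s)"

text \<open>Base case of the edge induction: without edges the polynomial factorises as
  \<Prod>(\<mu> v + 1), and anchoredness forces every activity into the open disk.\<close>
lemma lee_yang_no_edges:
  assumes V: "finite V" and anchored: "anchored V {} \<mu>"
  shows "multiaffine V (cut_weight {} \<beta>) \<mu> \<noteq> 0"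
proof -
  have inside: "cmod (\<mu> z) < 1" if z: "z \<in> V" for z
  proof -
    obtain s where s: "cmod (\<mu> s) < 1" "(adj {})\<^sup>*\<^sup>* z s"
      using bspec[OF anchored[unfolded anchored_def] z] by blast
    from s(2) have "z = s" by (cases rule: rtranclp.cases) (auto simp: adj_def)
    with s(1) show ?thesis by simp
  qed
  have factor: "\<mu> z + 1 \<noteq> 0" if "z \<in> V" for z
  proof
    assume "\<mu> z + 1 = 0"
    then have "\<mu> z = -1" by (simp add: eq_neg_iff_add_eq_0)
    then show False using inside[OF that] by simp
  qed
  then have "(\<Prod>v\<in>V. \<mu> v + 1) \<noteq> 0" using V by (simp add: prod_zero_iff)
  moreover have "multiaffine V (cut_weight {} \<beta>) \<mu> = (\<Prod>v\<in>V. \<mu> v + 1)"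
    unfolding multiaffine_def cut_weight_def cut_size_def using prod_add[OF V, of \<mu> "\<lambda>_. 1"] by simp
  ultimately show ?thesis by simp
qed

lemma reach_remove_edge:
  assumes "(adj (insert {u, v} H))\<^sup>*\<^sup>* z t"
  shows "\<exists>s\<in>{t, u, v}. (adj H)\<^sup>*\<^sup>* z s"
  using assms
proof (induction rule: rtranclp_induct)
  case (step y t)
  show ?case
  proof (cases "{y, t} = {u, v}")
    case True
    then have "y \<in> {u, v}" by (auto simp: doubleton_eq_iff)
    then show ?thesis using step.IH by auto
  next
    case False
    then have "adj H y t" using step.hyps(2) unfolding adj_def by auto
    then show ?thesis using step.IH by (auto intro: rtranclp.rtrancl_into_rtrancl)
  qed
qed simp

lemma anchored_remove_edge:
  assumes "anchored V (insert {u, v} H) \<mu>" "u \<in> V" "v \<in> V" "cmod x < 1" "cmod y < 1"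
  shows "anchored V H (\<mu>(u := x, v := y))"
  unfolding anchored_def
proof
  fix z assume "z \<in> V"
  then obtain t where t: "t \<in> V" "cmod (\<mu> t) < 1" "(adj (insert {u, v} H))\<^sup>*\<^sup>* z t"
    using assms(1) unfolding anchored_def by blast
  have "\<forall>s\<in>{t, u, v}. s \<in> V \<and> cmod ((\<mu>(u := x, v := y)) s) < 1"
    using t assms(2-5) by auto
  then show "\<exists>s\<in>V. cmod ((\<mu>(u := x, v := y)) s) < 1 \<and> (adj H)\<^sup>*\<^sup>* z s"
    using reach_remove_edge[OF t(3)] by blast
qed

lemma anchored_open_edge:
  assumes "edges_within V H" "anchored V H \<mu>" "H \<noteq> {}"
  obtains u v where "{u, v} \<in> H" "u \<noteq> v" "u \<in> V" "v \<in> V" "cmod (\<mu> u) < 1"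
proof -
  obtain e where e: "e \<in> H" using assms(3) by blast
  then obtain a b where ab: "{a, b} \<in> H" "a \<noteq> b" "a \<in> V" "b \<in> V"
    using bspec[OF assms(1)[unfolded edges_within_def] e] by blast
  then obtain s where s: "s \<in> V" "cmod (\<mu> s) < 1" "(adj H)\<^sup>*\<^sup>* a s"
    using assms(2) unfolding anchored_def by blast
  show ?thesis
  proof (cases "a = s")
    case True
    then show ?thesis using that ab s by blast
  next
    case False
    obtain y where "adj H y s" using s(3) False by (metis rtranclp.cases)
    then have sy: "{s, y} \<in> H" unfolding adj_def by (simp add: insert_commute)
    then obtain p q where "{s, y} = {p, q}" "p \<noteq> q" "p \<in> V" "q \<in> V"
      using bspec[OF assms(1)[unfolded edges_within_def] sy] by blast
    then have "s \<noteq> y" "y \<in> V" by (auto simp: doubleton_eq_iff)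
    then show ?thesis using sy s by (intro that[of s y]) auto
  qed
qed

text \<open>Induction removes one edge at a time,
  using the Asano contraction in the form of edge_product_closed.\<close>
lemma lee_yang_anchored:
  assumes V: "finite V" and \<beta>: "0 < \<beta>" "\<beta> < 1"
  shows "finite H \<Longrightarrow> edges_within V H \<Longrightarrow> \<forall>v\<in>V. cmod (\<mu> v) \<le> 1 \<Longrightarrow> anchored V H \<mu> \<Longrightarrow>
    multiaffine V (cut_weight H \<beta>) \<mu> \<noteq> 0"
proof (induction H arbitrary: \<mu> rule: finite_psubset_induct)
  case (psubset H)
  show ?case
  proof (cases "H = {}")
    case True
    show ?thesis
      unfolding True by (rule lee_yang_no_edges[OF V psubset.prems(3)[unfolded True]])
  next
    case False
    obtain u v where uv: "{u, v} \<in> H" "u \<noteq> v" "u \<in> V" "v \<in> V" "cmod (\<mu> u) < 1"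
      using anchored_open_edge[OF psubset.prems(1,3) False] .
    define H' where "H' = H - {{u, v}}"
    have H: "H = insert {u, v} H'" and nH': "{u, v} \<notin> H'" and sub: "H' \<subset> H"
      unfolding H'_def using uv by auto
    have fH': "finite H'" using psubset.hyps sub finite_subset by auto
    let ?c = "pair_coeff V u v (cut_weight H' \<beta>) \<mu>"
    have "?c {} + ?c {u} * x + ?c {v} * y + ?c {u, v} * x * y \<noteq> 0"
      if "cmod x < 1" "cmod y < 1" for x y
    proof -
      have "multiaffine V (cut_weight H' \<beta>) (\<mu>(u := x, v := y)) \<noteq> 0"
      proof (rule psubset.IH[OF sub])
        show "edges_within V H'" using psubset.prems(1) sub unfolding edges_within_def by auto
        show "\<forall>w\<in>V. cmod ((\<mu>(u := x, v := y)) w) \<le> 1" using psubset.prems(2) that by auto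
        show "anchored V H' (\<mu>(u := x, v := y))"
          using anchored_remove_edge[of V u v H' \<mu> x y] psubset.prems(3) uv(3,4) that unfolding H by simp
      qed
      then show ?thesis using multiaffine_pair_decomp[OF V uv(3,4,2)] by simp
    qed
    then have "?c {} + \<beta> * ?c {u} * \<mu> u + \<beta> * ?c {v} * \<mu> v + ?c {u, v} * \<mu> u * \<mu> v \<noteq> 0"
      by (rule edge_product_closed[OF \<beta> _ uv(5)]) (use psubset.prems(2) uv(4) in auto)
    then show ?thesis
      unfolding H using multiaffine_insert_edge[OF V uv(3,4,2) fH' nH'] by simp
  qed
qed

lemma finite_graph_iff: "finite_graph V E \<longleftrightarrow> finite V \<and> edges_within V E"
  unfolding finite_graph_def edges_within_def ..

lemma edges_within_endpoints:
  assumes "edges_within V E" "{u, v} \<in> E"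
  shows "u \<in> V" "v \<in> V"
proof -
  obtain a b where "{u, v} = {a, b}" "a \<in> V" "b \<in> V"
    using bspec[OF assms(1)[unfolded edges_within_def] assms(2)] by blast
  then show "u \<in> V" "v \<in> V" by (auto simp: doubleton_eq_iff)
qed

lemma edges_within_finite:
  assumes "finite V" "edges_within V E"
  shows "finite E"
proof (rule finite_subset)
  have "e \<subseteq> V" if "e \<in> E" for e
    using bspec[OF assms(2)[unfolded edges_within_def] that] by auto
  then show "E \<subseteq> Pow V" by auto
qed (use assms(1) in simp)

lemma cut_size_cong:
  assumes "edges_within V E"
    and "\<And>u v. u \<in> V \<Longrightarrow> v \<in> V \<Longrightarrow> (u \<in> S) \<noteq> (v \<in> S) \<longleftrightarrow> (u \<in> T) \<noteq> (v \<in> T)"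
  shows "cut_size E S = cut_size E T"
  unfolding cut_size_def
proof (intro arg_cong[where f = card] Collect_cong conj_cong refl)
  fix e assume "e \<in> E"
  then show "(\<exists>u v. e = {u, v} \<and> (u \<in> S) \<noteq> (v \<in> S)) = (\<exists>u v. e = {u, v} \<and> (u \<in> T) \<noteq> (v \<in> T))"
    using edges_within_endpoints[OF assms(1)] assms(2) by metis
qed

lemma bij_configs_Pow: "bij_betw (\<lambda>\<sigma>. {v\<in>V. \<sigma> v}) (configs V) (Pow V)"
proof (rule bij_betw_byWitness[where f' = "\<lambda>S. restrict (\<lambda>v. v \<in> S) V"])
  show "\<forall>\<sigma>\<in>configs V. restrict (\<lambda>v. v \<in> {v \<in> V. \<sigma> v}) V = \<sigma>"
    unfolding configs_def by (auto simp: PiE_def extensional_def restrict_def fun_eq_iff)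
qed (auto simp: configs_def)

lemma Z_I_subset_sum:
  assumes "finite_graph V E"
  shows "Z_I V E \<beta> = (\<Sum>S\<in>Pow V. monom (cut_weight E \<beta> S) (card S))"
proof -
  have "disagree E \<sigma> = cut_size E {v\<in>V. \<sigma> v}" for \<sigma>
  proof -
    have "disagree E \<sigma> = cut_size E {v. \<sigma> v}" unfolding disagree_def cut_size_def by simp
    also have "\<dots> = cut_size E {v\<in>V. \<sigma> v}"
      using assms unfolding finite_graph_iff by (intro cut_size_cong) auto
    finally show ?thesis .
  qed
  then have "Z_I V E \<beta> = (\<Sum>\<sigma>\<in>configs V. (\<lambda>S. monom (cut_weight E \<beta> S) (card S)) {v\<in>V. \<sigma> v})"
    unfolding Z_I_def cut_weight_def plus_count_def by (simp add: of_real_power)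
  also have "\<dots> = (\<Sum>S\<in>Pow V. monom (cut_weight E \<beta> S) (card S))"
    by (rule sum.reindex_bij_betw[OF bij_configs_Pow])
  finally show ?thesis .
qed

lemma poly_Z_I:
  assumes "finite_graph V E"
  shows "poly (Z_I V E \<beta>) x = multiaffine V (cut_weight E \<beta>) (\<lambda>_. x)"
  unfolding Z_I_subset_sum[OF assms] multiaffine_def by (simp add: poly_sum poly_monom)

lemma pderiv_sum: "pderiv (\<Sum>x\<in>A. f x) = (\<Sum>x\<in>A. pderiv (f x))"
  using higher_pderiv_sum[of 1 f A] by simp

lemma poly_pderiv_Z_I:
  assumes G: "finite_graph V E"
  shows "poly (pderiv (Z_I V E \<beta>)) l = (\<Sum>v\<in>V. vertex_partial V (cut_weight E \<beta>) l v)"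
proof -
  have V: "finite V" using G unfolding finite_graph_iff by simp
  have "poly (pderiv (Z_I V E \<beta>)) l = (\<Sum>S\<in>Pow V. of_nat (card S) * cut_weight E \<beta> S * l ^ (card S - 1))"
    unfolding Z_I_subset_sum[OF G] by (simp add: pderiv_sum poly_sum pderiv_monom poly_monom)
  also have "\<dots> = (\<Sum>S\<in>Pow V. \<Sum>v\<in>{v. v \<in> V \<and> v \<in> S}. cut_weight E \<beta> S * l ^ (card S - 1))"
  proof (intro sum.cong refl)
    fix S assume "S \<in> Pow V"
    then have "{v. v \<in> V \<and> v \<in> S} = S" by auto
    then show "of_nat (card S) * cut_weight E \<beta> S * l ^ (card S - 1) =
        (\<Sum>v\<in>{v. v \<in> V \<and> v \<in> S}. cut_weight E \<beta> S * l ^ (card S - 1))"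
      by simp
  qed
  also have "\<dots> = (\<Sum>v\<in>V. \<Sum>S\<in>{S. S \<in> Pow V \<and> v \<in> S}. cut_weight E \<beta> S * l ^ (card S - 1))"
    by (rule sum.swap_restrict) (use V in auto)
  finally show ?thesis unfolding vertex_partial_def by simp
qed

text \<open>For a connected graph a single activity inside the open disk anchors every vertex.\<close>
lemma lee_yang_connected:
  assumes G: "finite_graph V E" "connected_graph V E" and \<beta>: "0 < \<beta>" "\<beta> < 1"
    and closed: "\<forall>v\<in>V. cmod (\<mu> v) \<le> 1" and s: "s \<in> V" "cmod (\<mu> s) < 1"
  shows "multiaffine V (cut_weight E \<beta>) \<mu> \<noteq> 0"
proof -
  have V: "finite V" and E: "edges_within V E" using G(1) unfolding finite_graph_iff by simp_all
  have "anchored V E \<mu>"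
    unfolding anchored_def
  proof
    fix z assume "z \<in> V"
    then have "(adj E)\<^sup>*\<^sup>* z s" using G(2) s(1) unfolding connected_graph_def by blast
    then show "\<exists>s\<in>V. cmod (\<mu> s) < 1 \<and> (adj E)\<^sup>*\<^sup>* z s" using s by blast
  qed
  then show ?thesis
    using lee_yang_anchored[OF V \<beta> edges_within_finite[OF V E] E closed] by simp
qed

lemma Z_I_nonzero_inside:
  assumes G: "finite_graph V E" "connected_graph V E" and \<beta>: "0 < \<beta>" "\<beta> < 1" and x: "cmod x < 1"
  shows "poly (Z_I V E \<beta>) x \<noteq> 0"
proof -
  obtain s where "s \<in> V" using G(2) unfolding connected_graph_def by blast
  then show ?thesis
    unfolding poly_Z_I[OF G(1)] using lee_yang_connected[OF G \<beta>] x by simp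
qed

text \<open>Spin-flip symmetry: Z_I is self-reciprocal, since S and its complement have the same cut.\<close>
lemma poly_Z_I_reflect:
  assumes G: "finite_graph V E" and x: "x \<noteq> 0"
  shows "poly (Z_I V E \<beta>) x = x ^ card V * poly (Z_I V E \<beta>) (1 / x)"
proof -
  have V: "finite V" and E: "edges_within V E" using G unfolding finite_graph_iff by simp_all
  have sum_form: "poly (Z_I V E \<beta>) y = (\<Sum>S\<in>Pow V. cut_weight E \<beta> S * y ^ card S)" for y
    unfolding poly_Z_I[OF G] multiaffine_def by simp
  have "poly (Z_I V E \<beta>) x = (\<Sum>S\<in>Pow V. cut_weight E \<beta> (V - S) * x ^ card (V - S))"
    unfolding sum_form
    by (rule sum.reindex_bij_witness[where i = "\<lambda>S. V - S" and j = "\<lambda>S. V - S"]) (auto simp: double_diff)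
  also have "\<dots> = (\<Sum>S\<in>Pow V. x ^ card V * (cut_weight E \<beta> S * (1 / x) ^ card S))"
  proof (intro sum.cong refl)
    fix S assume "S \<in> Pow V"
    then have SV: "S \<subseteq> V" by simp
    have "cut_size E (V - S) = cut_size E S" using E by (rule cut_size_cong) auto
    moreover have "x ^ card (V - S) = x ^ card V / x ^ card S"
      using SV V x by (simp add: card_Diff_subset finite_subset card_mono power_diff)
    ultimately show "cut_weight E \<beta> (V - S) * x ^ card (V - S) = x ^ card V * (cut_weight E \<beta> S * (1 / x) ^ card S)"
      unfolding cut_weight_def by (simp add: field_simps)
  qed
  also have "\<dots> = x ^ card V * poly (Z_I V E \<beta>) (1 / x)"
    unfolding sum_form by (simp add: sum_distrib_left)
  finally show ?thesis .
qed

lemma Z_I_zeros_on_circle: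
  assumes G: "finite_graph V E" "connected_graph V E" and \<beta>: "0 < \<beta>" "\<beta> < 1"
    and zero: "poly (Z_I V E \<beta>) x = 0"
  shows "cmod x = 1"
proof (rule ccontr)
  assume "cmod x \<noteq> 1"
  then consider "cmod x < 1" | "cmod x > 1" by linarith
  then show False
  proof cases
    case 1
    then show False using Z_I_nonzero_inside[OF G \<beta>] zero by blast
  next
    case 2
    then have x: "x \<noteq> 0" and inv: "cmod (1 / x) < 1" by (auto simp: norm_divide divide_less_eq)
    from inv have "poly (Z_I V E \<beta>) (1 / x) \<noteq> 0" by (rule Z_I_nonzero_inside[OF G \<beta>])
    then show False using zero poly_Z_I_reflect[OF G(1) x] x by simp
  qed
qed

text \<open>The coefficient of \<lambda>^|V| is 1 (all spins +, empty cut), so Z_I is not constant.\<close>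
lemma Z_I_degree_pos:
  assumes G: "finite_graph V E" "connected_graph V E"
  shows "degree (Z_I V E \<beta>) \<ge> 1"
proof -
  have V: "finite V" and E: "edges_within V E" using G(1) unfolding finite_graph_iff by simp_all
  have "coeff (Z_I V E \<beta>) (card V) = (\<Sum>S\<in>Pow V. if card S = card V then cut_weight E \<beta> S else 0)"
    unfolding Z_I_subset_sum[OF G(1)] by (simp add: coeff_sum)
  also have "\<dots> = (\<Sum>S\<in>Pow V. if S = V then cut_weight E \<beta> S else 0)"
  proof (intro sum.cong refl)
    fix S assume "S \<in> Pow V"
    then have "card S = card V \<longleftrightarrow> S = V" using V by (meson PowD card_subset_eq)
    then show "(if card S = card V then cut_weight E \<beta> S else 0) = (if S = V then cut_weight E \<beta> S else 0)"
      by simp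
  qed
  also have "\<dots> = cut_weight E \<beta> V" using V by simp
  also have "cut_size E V = cut_size E {}" using E by (rule cut_size_cong) auto
  then have "cut_weight E \<beta> V = 1" unfolding cut_weight_def cut_size_def by simp
  finally have "coeff (Z_I V E \<beta>) (card V) \<noteq> 0" by simp
  then have "card V \<le> degree (Z_I V E \<beta>)" by (rule le_degree)
  moreover have "card V \<ge> 1"
    using G(2) V unfolding connected_graph_def by (simp add: Suc_le_eq card_gt_0_iff)
  ultimately show ?thesis by simp
qed

text \<open>At a zero l of Z_I (necessarily on the unit circle) no single partial derivative of
  the multiaffine polynomial vanishes: otherwise moving that vertex activity to 0
  would keep the value 0, contradicting Lee--Yang.\<close>
lemma vertex_partial_nonzero:
  assumes G: "finite_graph V E" "connected_graph V E" and \<beta>: "0 < \<beta>" "\<beta> < 1"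
    and l: "cmod l = 1" and zero: "poly (Z_I V E \<beta>) l = 0" and v: "v \<in> V"
  shows "vertex_partial V (cut_weight E \<beta>) l v \<noteq> 0"
proof
  assume partial: "vertex_partial V (cut_weight E \<beta>) l v = 0"
  have V: "finite V" using G(1) unfolding finite_graph_iff by simp
  note update = multiaffine_update_vertex[OF V v, of "cut_weight E \<beta>" l]
  have "multiaffine V (cut_weight E \<beta>) ((\<lambda>_. l)(v := 0)) \<noteq> 0"
    using lee_yang_connected[OF G \<beta> _ v] l by simp
  moreover have "multiaffine V (cut_weight E \<beta>) ((\<lambda>_. l)(v := l)) = 0"
    using zero unfolding poly_Z_I[OF G(1)] by (simp add: fun_upd_idem)
  ultimately show False using update[of 0] update[of l] partial by simp
qed

text \<open>Any two partial derivatives at a zero l point into the same closed half-plane;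
  this is the two-variable alignment lemma applied to the vertices u and v.\<close>
lemma vertex_partial_ratio_nonneg:
  assumes G: "finite_graph V E" "connected_graph V E" and \<beta>: "0 < \<beta>" "\<beta> < 1"
    and l: "cmod l = 1" and zero: "poly (Z_I V E \<beta>) l = 0"
    and u: "u \<in> V" and v: "v \<in> V" and uv: "u \<noteq> v"
  shows "Re (vertex_partial V (cut_weight E \<beta>) l u / vertex_partial V (cut_weight E \<beta>) l v) \<ge> 0"
proof -
  have V: "finite V" using G(1) unfolding finite_graph_iff by simp
  let ?w = "cut_weight E \<beta>"
  let ?c = "pair_coeff V u v ?w (\<lambda>_. l)"
  have pair: "multiaffine V ?w ((\<lambda>_. l)(u := x, v := y)) = ?c {} + ?c {u} * x + ?c {v} * y + ?c {u, v} * x * y"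
    for x y by (rule multiaffine_pair_decomp[OF V u v uv])
  have "vertex_rest V ?w l u + vertex_partial V ?w l u * x = ?c {} + ?c {u} * x + ?c {v} * l + ?c {u, v} * x * l" for x
    using pair[of x l] multiaffine_update_vertex[OF V u, of ?w l x] uv
    by (simp add: fun_upd_idem fun_upd_twist)
  from this[of 0] this[of 1] have bu: "vertex_partial V ?w l u = ?c {u} + ?c {u, v} * l"
    by (simp add: algebra_simps)
  have "vertex_rest V ?w l v + vertex_partial V ?w l v * y = ?c {} + ?c {u} * l + ?c {v} * y + ?c {u, v} * l * y" for y
    using pair[of l y] multiaffine_update_vertex[OF V v, of ?w l y] by (simp add: fun_upd_idem)
  from this[of 0] this[of 1] have bv: "vertex_partial V ?w l v = ?c {v} + ?c {u, v} * l"
    by (simp add: algebra_simps)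
  have "?c {} + ?c {u} * l + ?c {v} * l + ?c {u, v} * l * l = 0"
    using pair[of l l] zero unfolding poly_Z_I[OF G(1)] by (simp add: fun_upd_idem)
  moreover have "?c {} + ?c {u} * x + ?c {v} * y + ?c {u, v} * x * y \<noteq> 0"
    if "cmod x < 1" "cmod y < 1" for x y
    using lee_yang_connected[OF G \<beta> _ u, of "(\<lambda>_. l)(u := x, v := y)"] pair that l uv by simp
  moreover have "?c {v} + ?c {u, v} * l \<noteq> 0"
    using vertex_partial_nonzero[OF G \<beta> l zero v] bv by simp
  ultimately show ?thesis
    using boundary_zero_alignment[OF l] bu bv by simp
qed

text \<open>All zeros of Z_I are simple: Z_I'(l) is the sum of the partial derivatives, which all
  lie in a half-plane and are nonzero.\<close>
lemma Z_I_simple_zero: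
  assumes G: "finite_graph V E" "connected_graph V E" and \<beta>: "0 < \<beta>" "\<beta> < 1"
    and zero: "poly (Z_I V E \<beta>) l = 0"
  shows "poly (pderiv (Z_I V E \<beta>)) l \<noteq> 0"
proof -
  have V: "finite V" using G(1) unfolding finite_graph_iff by simp
  have l: "cmod l = 1" using Z_I_zeros_on_circle[OF G \<beta> zero] .
  obtain v where v: "v \<in> V" using G(2) unfolding connected_graph_def by blast
  let ?b = "vertex_partial V (cut_weight E \<beta>) l"
  have bv: "?b v \<noteq> 0" using vertex_partial_nonzero[OF G \<beta> l zero v] .
  have "Re (\<Sum>u\<in>V. ?b u / ?b v) = Re (?b v / ?b v) + (\<Sum>u\<in>V - {v}. Re (?b u / ?b v))"
    using V v by (simp add: sum.remove)
  moreover have "(\<Sum>u\<in>V - {v}. Re (?b u / ?b v)) \<ge> 0"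
    using vertex_partial_ratio_nonneg[OF G \<beta> l zero _ v] by (intro sum_nonneg) auto
  ultimately have "Re (\<Sum>u\<in>V. ?b u / ?b v) \<ge> 1" using bv by simp
  then have "(\<Sum>u\<in>V. ?b u / ?b v) \<noteq> 0" by (metis zero_complex.simps(1) not_one_le_zero)
  moreover have "poly (pderiv (Z_I V E \<beta>)) l = ?b v * (\<Sum>u\<in>V. ?b u / ?b v)"
    unfolding poly_pderiv_Z_I[OF G(1)] using bv by (simp add: sum_distrib_left)
  ultimately show ?thesis using bv by simp
qed

lemma Re_div_diff_ge_half:
  fixes a l :: complex
  assumes "cmod a \<le> cmod l" "a \<noteq> l"
  shows "Re (l / (l - a)) \<ge> 1/2"
proof -
  define d where "d = (cmod (l - a))^2"
  define N where "N = Re l * Re (l - a) + Im l * Im (l - a)"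
  have d: "d > 0" unfolding d_def using assms(2) by simp
  have "(cmod a)^2 \<le> (cmod l)^2" using assms(1) by (simp add: power_mono)
  moreover have "2 * N - d = (cmod l)^2 - (cmod a)^2"
    unfolding d_def N_def cmod_power2 by (simp add: power2_eq_square algebra_simps)
  ultimately have "d \<le> 2 * N" by linarith
  then have "1/2 \<le> N / d" using d by (simp add: le_divide_eq)
  moreover have "Re (l / (l - a)) = N / d" unfolding N_def d_def by (simp add: Re_divide cmod_power2)
  ultimately show ?thesis by simp
qed

lemma poly_pderiv_log:
  fixes p :: "complex poly"
  assumes pl: "poly p l \<noteq> 0"
  obtains root where "\<And>i. i < degree p \<Longrightarrow> poly p (root i) = 0"
    and "poly (pderiv p) l = poly p l * (\<Sum>i<degree p. 1 / (l - root i))"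
proof -
  obtain root where R: "smult (lead_coeff p) (\<Prod>i<degree p. [:-root i, 1:]) = p"
    using complex_poly_decompose' by blast
  define A where "A = {..<degree p}"
  have fA: "finite A" unfolding A_def by simp
  have pe: "poly p x = lead_coeff p * (\<Prod>i\<in>A. x - root i)" for x
    by (subst R[symmetric]) (simp add: A_def poly_prod)
  have zeros: "poly p (root i) = 0" if "i \<in> A" for i
    unfolding pe using fA that by auto
  have nz: "l - root i \<noteq> 0" if "i \<in> A" for i
    using pl zeros that by auto
  have "pderiv p = smult (lead_coeff p) (\<Sum>i\<in>A. \<Prod>j\<in>A - {i}. [:-root j, 1:])"
    by (subst R[symmetric]) (simp add: A_def pderiv_smult pderiv_prod pderiv_pCons)
  then have "poly (pderiv p) l = lead_coeff p * (\<Sum>i\<in>A. \<Prod>j\<in>A - {i}. l - root j)"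
    by (simp add: poly_sum poly_prod)
  also have "\<dots> = lead_coeff p * (\<Sum>i\<in>A. (\<Prod>j\<in>A. l - root j) / (l - root i))"
    using nz fA by (intro arg_cong2[where f = "(*)"] sum.cong refl) (simp add: prod_diff1)
  also have "\<dots> = poly p l * (\<Sum>i\<in>A. 1 / (l - root i))"
    unfolding pe by (simp add: sum_distrib_left)
  finally show ?thesis using that zeros unfolding A_def by blast
qed

lemma pderiv_nonzero_outside_disk:
  fixes p :: "complex poly"
  assumes deg: "degree p \<ge> 1" and zeros: "\<And>a. poly p a = 0 \<Longrightarrow> cmod a \<le> 1"
    and l: "cmod l \<ge> 1" and pl: "poly p l \<noteq> 0"
  shows "poly (pderiv p) l \<noteq> 0"
proof -
  obtain root where root: "\<And>i. i < degree p \<Longrightarrow> poly p (root i) = 0"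
    and log: "poly (pderiv p) l = poly p l * (\<Sum>i<degree p. 1 / (l - root i))"
    using poly_pderiv_log[OF pl] by blast
  have "Re (l * (\<Sum>i<degree p. 1 / (l - root i))) = (\<Sum>i<degree p. Re (l / (l - root i)))"
    by (simp add: sum_distrib_left)
  also have "\<dots> \<ge> (\<Sum>i<degree p. 1/2)"
  proof (intro sum_mono Re_div_diff_ge_half)
    fix i assume "i \<in> {..<degree p}"
    then have "poly p (root i) = 0" by (simp add: root)
    then show "cmod (root i) \<le> cmod l" and "root i \<noteq> l" using zeros l pl by force+
  qed
  finally have "Re (l * (\<Sum>i<degree p. 1 / (l - root i))) > 0" using deg by simp
  then have "(\<Sum>i<degree p. 1 / (l - root i)) \<noteq> 0"
    by (metis mult_zero_right zero_complex.simps(1) less_irrefl)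
  then show ?thesis using log pl by simp
qed

text \<open>Every zero of Z_I' lies in the open unit disk: a zero on or outside the circle would be
  a multiple zero of Z_I (if Z_I vanishes there) or contradict the Gauss--Lucas estimate.\<close>
lemma Z_I_pderiv_zeros_in_disk:
  assumes G: "finite_graph V E" "connected_graph V E" and \<beta>: "0 < \<beta>" "\<beta> < 1"
    and z: "poly (pderiv (Z_I V E \<beta>)) z = 0"
  shows "cmod z < 1"
proof (rule ccontr)
  assume "\<not> cmod z < 1"
  moreover have "poly (Z_I V E \<beta>) z \<noteq> 0" using Z_I_simple_zero[OF G \<beta>] z by blast
  moreover have "cmod a \<le> 1" if "poly (Z_I V E \<beta>) a = 0" for a
    using Z_I_zeros_on_circle[OF G \<beta> that] by simp
  ultimately have "poly (pderiv (Z_I V E \<beta>)) z \<noteq> 0"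
    using pderiv_nonzero_outside_disk[OF Z_I_degree_pos[OF G]] by simp
  then show False using z by simp
qed

theorem theorem1:
  fixes V :: "'a set" and E :: "'a set set" and \<beta> :: real
  assumes "finite_graph V E" and "connected_graph V E"
    and "0 < \<beta>" and "\<beta> < 1"
  shows "(\<forall>z::complex. poly (DZ_I V E \<beta>) z = 0 \<longrightarrow> cmod z < 1)
       \<and> (\<forall>z::complex. \<not> (poly (Z_I V E \<beta>) z = 0 \<and> poly (DZ_I V E \<beta>) z = 0))
       \<and> rsquarefree (Z_I V E \<beta>)"
proof -
  note G = assms(1,2) and \<beta> = assms(3,4)
  have simple: "\<not> (poly (Z_I V E \<beta>) z = 0 \<and> poly (pderiv (Z_I V E \<beta>)) z = 0)" for z
    using Z_I_simple_zero[OF G \<beta>] by blast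
  have DZ: "poly (DZ_I V E \<beta>) z = z * poly (pderiv (Z_I V E \<beta>)) z" for z
    unfolding DZ_I_def by simp
  have "cmod z < 1" if "poly (DZ_I V E \<beta>) z = 0" for z
    using that Z_I_pderiv_zeros_in_disk[OF G \<beta>] unfolding DZ by auto
  moreover have "\<not> (poly (Z_I V E \<beta>) z = 0 \<and> poly (DZ_I V E \<beta>) z = 0)" for z
    using simple Z_I_nonzero_inside[OF G \<beta>] unfolding DZ by force
  moreover have "rsquarefree (Z_I V E \<beta>)"
    unfolding rsquarefree_roots using simple by blast
  ultimately show ?thesis by blast
qed

end
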